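(* Let $G$ be a nilpotent group in which every non-abelian subgroup $H$ satisfies $C_G(H)\le H$. Then $G$ is abelian or finite.
   Context: $C_G(H)$ denotes the centralizer of $H$ in $G$. The class of groups in which every non-abelian subgroup contains its own centralizer is denoted $\mathfrak A$ in the paper. *)

theory Defs
  imports "HOL-Algebra.Algebra"
begin

definition commutator_subgroup :: "('a, 'b) monoid_scheme \<Rightarrow> 'a set \<Rightarrow> 'a set \<Rightarrow> 'a set" where
  "commutator_subgroup G A B = generate G
     (\<Union>a \<in> A. \<Union>b \<in> B. {a \<otimes>\<^bsub>G\<^esub> b \<otimes>\<^bsub>G\<^esub> inv\<^bsub>G\<^esub> a \<otimes>\<^bsub>G\<^esub> inv\<^bsub>G\<^esub> b})"

fun lower_central :: "('a, 'b) monoid_scheme \<Rightarrow> nat \<Rightarrow> 'a set" where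
  "lower_central G 0 = carrier G"
| "lower_central G (Suc n) = commutator_subgroup G (lower_central G n) (carrier G)"

definition nilpotent_group :: "('a, 'b) monoid_scheme \<Rightarrow> bool" where
  "nilpotent_group G \<longleftrightarrow> group G \<and> (\<exists>n. lower_central G n = {\<one>\<^bsub>G\<^esub>})"

definition centralizer :: "('a, 'b) monoid_scheme \<Rightarrow> 'a set \<Rightarrow> 'a set" where
  "centralizer G H = {g \<in> carrier G. \<forall>h \<in> H. g \<otimes>\<^bsub>G\<^esub> h = h \<otimes>\<^bsub>G\<^esub> g}"

definition abelian_set :: "('a, 'b) monoid_scheme \<Rightarrow> 'a set \<Rightarrow> bool" where
  "abelian_set G H \<longleftrightarrow> (\<forall>x \<in> H. \<forall>y \<in> H. x \<otimes>\<^bsub>G\<^esub> y = y \<otimes>\<^bsub>G\<^esub> x)"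

end

theory Submission
  imports Defs "HOL-Algebra.Multiplicative_Group"
begin

text \<open>
  If \<open>G\<close> is not abelian, nilpotency provides \<open>a, b\<close> whose commutator \<open>c\<close> is central and
  nontrivial, so every element of \<open>\<langle>a, b\<rangle>\<close> has the form \<open>c\<^sup>k a\<^sup>i b\<^sup>j\<close>. Whenever
  \<open>[a\<^sup>p, b\<^sup>p] = c^(p\<^sup>2) \<noteq> 1\<close>, the subgroup \<open>\<langle>a\<^sup>p, b\<^sup>p\<rangle>\<close> is non-abelian and therefore contains
  every element commuting with \<open>a\<close> and \<open>b\<close>. For \<open>p = 2\<close> and the element \<open>c\<close> this forces
  \<open>c\<close> to have finite order \<open>N\<close>; for \<open>p = N + 1\<close> and the elements \<open>a\<^sup>N, b\<^sup>N\<close> it yields two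
  relations between \<open>a\<^sup>N\<close> and \<open>b\<^sup>N\<close> whose determinant is \<open>1\<close> modulo \<open>p\<close>, so \<open>a\<close> and \<open>b\<close>
  have finite order and \<open>\<langle>a, b\<rangle>\<close> is finite. Finally, \<open>\<langle>a, b, \<gamma>\<^sub>i\<rangle>\<close> is finite by downward
  induction along the lower central series: \<open>L = \<langle>a, b, \<gamma>\<^sub>i\<^sub>+\<^sub>1\<rangle>\<close> is finite, non-abelian and
  normalised by \<open>\<gamma>\<^sub>i\<close>, and a group normalising such an \<open>L\<close> is finite, because elements inducing
  the same conjugation on \<open>L\<close> differ by an element of \<open>C(L) \<subseteq> L\<close>.
\<close>

lemma det_one_mod_ne_zero:
  fixes p i1 j1 i2 j2 :: int
  assumes "p > 1"
  shows "(p * i1 - 1) * (p * j2 - 1) - p * j1 * (p * i2) \<noteq> 0"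
proof
  assume "(p * i1 - 1) * (p * j2 - 1) - p * j1 * (p * i2) = 0"
  then have "p * (p * i1 * j2 - i1 - j2 - p * i2 * j1) = - 1" by (simp add: algebra_simps)
  then have "p dvd 1" by (metis dvd_minus_iff dvd_triv_left)
  then show False using assms by simp
qed

context group begin

lemma centralizer_carrier_commute:
  "d \<in> centralizer G (carrier G) \<Longrightarrow> g \<in> carrier G \<Longrightarrow> d \<otimes> g = g \<otimes> d"
  unfolding centralizer_def by blast

lemma int_pow_commute:
  assumes u: "u \<in> carrier G" and z: "z \<in> carrier G" and uz: "u \<otimes> z = z \<otimes> u"
  shows "u [^] (i::int) \<otimes> z = z \<otimes> u [^] i"
proof (cases i rule: int_cases)
  case (nonneg n)
  then show ?thesis using group_commutes_pow[OF uz u z] by (simp add: int_pow_int)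
next
  case (neg n)
  define w where "w = u [^] Suc n"
  have w: "w \<in> carrier G" using u by (simp add: w_def)
  have wz: "w \<otimes> z = z \<otimes> w" unfolding w_def by (rule group_commutes_pow[OF uz u z])
  have "inv w \<otimes> z = inv w \<otimes> (z \<otimes> w) \<otimes> inv w" using w z by (simp add: m_assoc)
  also have "\<dots> = z \<otimes> inv w" using w z by (simp add: m_assoc flip: wz, simp flip: m_assoc)
  moreover have "u [^] i = inv w"
    using int_pow_neg_int[OF u, of "Suc n"] unfolding neg w_def by (simp add: algebra_simps)
  ultimately show ?thesis by simp
qed

lemma centralizer_carrier_int_pow:
  assumes "d \<in> centralizer G (carrier G)"
  shows "d [^] (i::int) \<in> centralizer G (carrier G)"
  using assms int_pow_commute unfolding centralizer_def by auto

lemma conj_central_swap: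
  assumes u: "u \<in> carrier G" and y: "y \<in> carrier G" and d: "d \<in> centralizer G (carrier G)"
    and r: "u \<otimes> y = d \<otimes> y \<otimes> u"
  shows "y \<otimes> u = inv d \<otimes> u \<otimes> y"
proof -
  have dc: "d \<in> carrier G" using d unfolding centralizer_def by blast
  have "inv d \<otimes> u \<otimes> y = inv d \<otimes> (d \<otimes> y \<otimes> u)" using u y dc by (simp add: r m_assoc flip: r)
  also have "\<dots> = y \<otimes> u" using u y dc by (simp add: m_assoc flip: m_assoc)
  finally show ?thesis by simp
qed

lemma conj_central_inv:
  assumes u: "u \<in> carrier G" and y: "y \<in> carrier G" and d: "d \<in> centralizer G (carrier G)"
    and r: "u \<otimes> y = d \<otimes> y \<otimes> u"
  shows "inv u \<otimes> y = inv d \<otimes> y \<otimes> inv u"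
proof -
  have dc: "d \<in> carrier G" using d unfolding centralizer_def by blast
  have "y \<otimes> inv u = inv u \<otimes> (u \<otimes> y) \<otimes> inv u" using u y by (simp flip: m_assoc)
  also have "\<dots> = inv u \<otimes> (d \<otimes> y \<otimes> u) \<otimes> inv u" by (simp only: r)
  also have "\<dots> = d \<otimes> inv u \<otimes> y"
    using u y dc centralizer_carrier_commute[OF d, of "inv u"] by (simp add: m_assoc)
  finally show ?thesis using u y dc by (simp add: m_assoc inv_solve_left)
qed

lemma nat_pow_conj_central:
  assumes u: "u \<in> carrier G" and y: "y \<in> carrier G" and d: "d \<in> centralizer G (carrier G)"
    and r: "u \<otimes> y = d \<otimes> y \<otimes> u"
  shows "u [^] (n::nat) \<otimes> y = d [^] n \<otimes> y \<otimes> u [^] n"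
proof (induction n)
  case 0
  then show ?case using y by simp
next
  case (Suc n)
  have dc: "d \<in> carrier G" using d unfolding centralizer_def by blast
  have "u [^] Suc n \<otimes> y = u [^] n \<otimes> (d \<otimes> y \<otimes> u)" using u y by (simp add: m_assoc flip: r)
  also have "\<dots> = d \<otimes> (u [^] n \<otimes> y) \<otimes> u"
    using u y dc centralizer_carrier_commute[OF d, of "u [^] n"] by (simp flip: m_assoc)
  also have "\<dots> = (d \<otimes> d [^] n) \<otimes> y \<otimes> (u [^] n \<otimes> u)"
    using u y dc by (simp add: Suc.IH m_assoc)
  also have "\<dots> = d [^] Suc n \<otimes> y \<otimes> u [^] Suc n"
    using nat_pow_Suc2[OF dc, of n] by simp
  finally show ?case .
qed

lemma int_pow_conj_central:
  assumes u: "u \<in> carrier G" and y: "y \<in> carrier G" and d: "d \<in> centralizer G (carrier G)"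
    and r: "u \<otimes> y = d \<otimes> y \<otimes> u"
  shows "u [^] (i::int) \<otimes> y = d [^] i \<otimes> y \<otimes> u [^] i"
proof (cases i rule: int_cases2)
  case (nonneg n)
  then show ?thesis using nat_pow_conj_central[OF assms] by (simp add: int_pow_int)
next
  case (nonpos n)
  have dc: "d \<in> carrier G" using d unfolding centralizer_def by blast
  have "d [^] n \<in> centralizer G (carrier G)"
    using centralizer_carrier_int_pow[OF d, of "int n"] by (simp add: int_pow_int)
  from conj_central_inv[OF _ y this nat_pow_conj_central[OF assms]]
  show ?thesis using u dc by (simp add: nonpos int_pow_neg_int)
qed

lemma int_pows_swap_central:
  assumes x: "x \<in> carrier G" and y: "y \<in> carrier G" and c: "c \<in> centralizer G (carrier G)"
    and r: "x \<otimes> y = c \<otimes> y \<otimes> x"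
  shows "y [^] (j::int) \<otimes> x [^] (i::int) = c [^] (- (i * j)) \<otimes> x [^] i \<otimes> y [^] j"
proof -
  have cc: "c \<in> carrier G" using c unfolding centralizer_def by blast
  have ci: "c [^] i \<in> centralizer G (carrier G)" by (rule centralizer_carrier_int_pow[OF c])
  have "y \<otimes> x [^] i = inv (c [^] i) \<otimes> x [^] i \<otimes> y"
    by (rule conj_central_swap[OF _ y ci int_pow_conj_central[OF x y c r]]) (use x in simp)
  from int_pow_conj_central[OF y _ _ this, of j]
  show ?thesis
    using x cc centralizer_carrier_int_pow[OF c, of "- i"] by (simp add: int_pow_inv int_pow_pow int_pow_neg)
qed

lemma int_pows_conj_central:
  assumes x: "x \<in> carrier G" and y: "y \<in> carrier G" and c: "c \<in> centralizer G (carrier G)"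
    and r: "x \<otimes> y = c \<otimes> y \<otimes> x"
  shows "x [^] (i::int) \<otimes> y [^] (j::int) = c [^] (i * j) \<otimes> y [^] j \<otimes> x [^] i"
  using conj_central_swap[OF _ _ centralizer_carrier_int_pow[OF c] int_pows_swap_central[OF assms]] x y c
  unfolding centralizer_def by (simp add: int_pow_neg)

lemma heisenberg_word_mult:
  assumes x: "x \<in> carrier G" and y: "y \<in> carrier G" and c: "c \<in> centralizer G (carrier G)"
    and r: "x \<otimes> y = c \<otimes> y \<otimes> x"
  shows "(c [^] (k::int) \<otimes> x [^] (i::int) \<otimes> y [^] (j::int)) \<otimes> (c [^] (k'::int) \<otimes> x [^] (i'::int) \<otimes> y [^] (j'::int))
    = c [^] (k + k' - i' * j) \<otimes> x [^] (i + i') \<otimes> y [^] (j + j')"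
proof -
  have cc: "c \<in> carrier G" using c unfolding centralizer_def by blast
  have commute1: "c [^] k' \<otimes> (x [^] i \<otimes> y [^] j) = (x [^] i \<otimes> y [^] j) \<otimes> c [^] k'"
    and commute2: "c [^] (- (i' * j)) \<otimes> x [^] i = x [^] i \<otimes> c [^] (- (i' * j))"
    using x y by (simp_all add: centralizer_carrier_commute[OF centralizer_carrier_int_pow[OF c]])
  have "(c [^] k \<otimes> x [^] i \<otimes> y [^] j) \<otimes> (c [^] k' \<otimes> x [^] i' \<otimes> y [^] j')
      = c [^] k \<otimes> ((x [^] i \<otimes> y [^] j) \<otimes> c [^] k') \<otimes> x [^] i' \<otimes> y [^] j'"
    using x y cc by (simp add: m_assoc)
  also have "\<dots> = c [^] k \<otimes> c [^] k' \<otimes> x [^] i \<otimes> (y [^] j \<otimes> x [^] i') \<otimes> y [^] j'"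
    using x y cc by (simp add: m_assoc flip: commute1)
  also have "\<dots> = c [^] k \<otimes> c [^] k' \<otimes> (x [^] i \<otimes> c [^] (- (i' * j))) \<otimes> x [^] i' \<otimes> y [^] j \<otimes> y [^] j'"
    using x y cc by (simp add: int_pows_swap_central[OF x y c r] m_assoc)
  also have "\<dots> = (c [^] k \<otimes> c [^] k' \<otimes> c [^] (- (i' * j))) \<otimes> (x [^] i \<otimes> x [^] i') \<otimes> (y [^] j \<otimes> y [^] j')"
    using x y cc by (simp add: m_assoc flip: commute2)
  also have "c [^] k \<otimes> c [^] k' \<otimes> c [^] (- (i' * j)) = c [^] (k + k' - i' * j)"
    using int_pow_mult[OF cc, of "k + k'" "- (i' * j)"] int_pow_mult[OF cc, of k k'] by simp
  finally show ?thesis using x y by (simp add: int_pow_mult)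
qed

lemma generate_pair_heisenberg_form:
  assumes x: "x \<in> carrier G" and y: "y \<in> carrier G" and c: "c \<in> centralizer G (carrier G)"
    and r: "x \<otimes> y = c \<otimes> y \<otimes> x" and h: "h \<in> generate G {x, y}"
  shows "\<exists>k i j. h = c [^] (k::int) \<otimes> x [^] (i::int) \<otimes> y [^] (j::int)"
  using h
proof (induction rule: generate.induct)
  case one
  have "\<one> = c [^] (0::int) \<otimes> x [^] (0::int) \<otimes> y [^] (0::int)" using x y c by simp
  then show ?case by blast
next
  case (incl h)
  have "x = c [^] (0::int) \<otimes> x [^] (1::int) \<otimes> y [^] (0::int)"
    and "y = c [^] (0::int) \<otimes> x [^] (0::int) \<otimes> y [^] (1::int)" using x y by simp_all
  then show ?case using incl by blast
next
  case (inv h)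
  have "inv x = c [^] (0::int) \<otimes> x [^] (-1::int) \<otimes> y [^] (0::int)"
    and "inv y = c [^] (0::int) \<otimes> x [^] (0::int) \<otimes> y [^] (-1::int)" using x y by (simp_all add: int_pow_neg)
  then show ?case using inv by blast
next
  case (eng h1 h2)
  then obtain k i j k' i' j' where "h1 = c [^] (k::int) \<otimes> x [^] (i::int) \<otimes> y [^] (j::int)"
    and "h2 = c [^] (k'::int) \<otimes> x [^] (i'::int) \<otimes> y [^] (j'::int)" by blast
  then show ?case using heisenberg_word_mult[OF x y c r] by blast
qed

lemma heisenberg_word_commute:
  assumes x: "x \<in> carrier G" and y: "y \<in> carrier G" and c: "c \<in> centralizer G (carrier G)"
    and r: "x \<otimes> y = c \<otimes> y \<otimes> x"
    and zx: "(c [^] (k::int) \<otimes> x [^] (i::int) \<otimes> y [^] (j::int)) \<otimes> x = x \<otimes> (c [^] k \<otimes> x [^] i \<otimes> y [^] j)"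
    and zy: "(c [^] k \<otimes> x [^] i \<otimes> y [^] j) \<otimes> y = y \<otimes> (c [^] k \<otimes> x [^] i \<otimes> y [^] j)"
  shows "c [^] i = \<one> \<and> c [^] j = \<one>"
proof -
  have cc: "c \<in> carrier G" using c unfolding centralizer_def by blast
  have cancel: "c [^] (n - m) = \<one>"
    if "c [^] m \<otimes> x [^] s \<otimes> y [^] t = c [^] n \<otimes> x [^] s \<otimes> y [^] t" for m n s t :: int
  proof -
    have "c [^] m = c [^] n" using that x y cc by simp
    then show ?thesis using cc by (simp add: int_pow_eq int_pow_eq_id)
  qed
  note mult = heisenberg_word_mult[OF x y c r]
  have "c [^] (k - j) \<otimes> x [^] (i + 1) \<otimes> y [^] j = c [^] k \<otimes> x [^] (i + 1) \<otimes> y [^] j"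
    using zx mult[of k i j 0 1 0] mult[of 0 1 0 k i j] x y cc by (simp add: add.commute)
  then have "c [^] j = \<one>" by (auto dest: cancel)
  moreover have "c [^] (k - i) \<otimes> x [^] i \<otimes> y [^] (j + 1) = c [^] k \<otimes> x [^] i \<otimes> y [^] (j + 1)"
    using zy mult[of k i j 0 0 1] mult[of 0 0 1 k i j] x y cc by (simp add: add.commute)
  then have "c [^] i = \<one>" by (auto dest: cancel)
  ultimately show ?thesis by simp
qed

lemma int_pow_mod_eq:
  assumes x: "x \<in> carrier G" and xM: "x [^] (M::int) = \<one>"
  shows "x [^] (k::int) = x [^] (k mod M)"
proof -
  have "int (ord x) dvd M" using x xM int_pow_eq_id by blast
  moreover have "M dvd k mod M - k" using mod_eq_dvd_iff[of "k mod M" M k] by simp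
  ultimately show ?thesis using x int_pow_eq dvd_trans by blast
qed

lemma finite_generate_pair_heisenberg:
  assumes x: "x \<in> carrier G" and y: "y \<in> carrier G" and c: "c \<in> centralizer G (carrier G)"
    and r: "x \<otimes> y = c \<otimes> y \<otimes> x" and M: "M > 0"
    and xM: "x [^] (M::int) = \<one>" and yM: "y [^] M = \<one>" and cM: "c [^] M = \<one>"
  shows "finite (generate G {x, y})"
proof -
  have cc: "c \<in> carrier G" using c unfolding centralizer_def by blast
  let ?word = "\<lambda>(k, i, j). c [^] k \<otimes> x [^] i \<otimes> y [^] j"
  have "generate G {x, y} \<subseteq> ?word ` ({0..<M} \<times> {0..<M} \<times> {0..<M})"
  proof
    fix h assume "h \<in> generate G {x, y}"
    then obtain k i j where "h = c [^] (k::int) \<otimes> x [^] (i::int) \<otimes> y [^] (j::int)"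
      using generate_pair_heisenberg_form[OF x y c r] by blast
    then have "h = ?word (k mod M, i mod M, j mod M)"
      using int_pow_mod_eq[OF x xM] int_pow_mod_eq[OF y yM] int_pow_mod_eq[OF cc cM] by simp
    moreover have "(k mod M, i mod M, j mod M) \<in> {0..<M} \<times> {0..<M} \<times> {0..<M}" using M by simp
    ultimately show "h \<in> ?word ` ({0..<M} \<times> {0..<M} \<times> {0..<M})" by (rule image_eqI)
  qed
  then show ?thesis by (rule finite_subset) simp
qed

lemma int_pow_det_eq_one:
  assumes u: "u \<in> carrier G" and v: "v \<in> carrier G"
    and r1: "u [^] (a::int) \<otimes> v [^] (b::int) = \<one>" and r2: "u [^] (c::int) \<otimes> v [^] (d::int) = \<one>"
  shows "u [^] (a * d - b * c) = \<one> \<and> v [^] (a * d - b * c) = \<one>"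
proof -
  have ua: "u [^] a = v [^] (- b)" and uc: "u [^] c = v [^] (- d)"
    using inv_equality[OF r1] inv_equality[OF r2] u v by (simp_all add: int_pow_neg)
  have vb: "v [^] b = u [^] (- a)" and vd: "v [^] d = u [^] (- c)"
    using inv_equality[OF inv_comm[OF r1]] inv_equality[OF inv_comm[OF r2]] u v by (simp_all add: int_pow_neg)
  have "u [^] (b * c) = u [^] (a * d)"
    using arg_cong[OF ua, of "\<lambda>g. g [^] d"] arg_cong[OF uc, of "\<lambda>g. g [^] b"] u v
    by (simp add: int_pow_pow mult.commute)
  moreover have "v [^] (b * c) = v [^] (a * d)"
    using arg_cong[OF vb, of "\<lambda>g. g [^] c"] arg_cong[OF vd, of "\<lambda>g. g [^] a"] u v
    by (simp add: int_pow_pow mult.commute)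
  ultimately show ?thesis using u v by (simp add: int_pow_eq int_pow_eq_id)
qed

lemma int_pow_central_word:
  assumes u: "u \<in> carrier G" and v: "v \<in> carrier G" and uv: "u \<otimes> v = v \<otimes> u"
    and d: "d \<in> centralizer G (carrier G)" and dN: "d [^] (N::int) = \<one>"
  shows "(d \<otimes> u [^] (s::int) \<otimes> v [^] (t::int)) [^] N = u [^] (s * N) \<otimes> v [^] (t * N)"
proof -
  have dc: "d \<in> carrier G" using d unfolding centralizer_def by blast
  have powers_commute: "u [^] s \<otimes> v [^] t = v [^] t \<otimes> u [^] s"
    using int_pow_commute[OF v _ int_pow_commute[OF u v uv, symmetric]] u v by simp
  have "(u [^] s \<otimes> v [^] t) [^] N = u [^] (s * N) \<otimes> v [^] (t * N)"
    using int_pow_mult_distrib[OF powers_commute] u v by (simp add: int_pow_pow)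
  moreover have "(d \<otimes> (u [^] s \<otimes> v [^] t)) [^] N = d [^] N \<otimes> (u [^] s \<otimes> v [^] t) [^] N"
    using int_pow_mult_distrib[OF centralizer_carrier_commute[OF d], of "u [^] s \<otimes> v [^] t"] u v dc
    by simp
  ultimately show ?thesis using u v dc dN by (simp add: m_assoc)
qed

lemma central_word_relation:
  assumes u: "u \<in> carrier G" and v: "v \<in> carrier G" and uv: "u \<otimes> v = v \<otimes> u"
    and d: "d \<in> centralizer G (carrier G)" and dN: "d [^] (N::int) = \<one>"
    and rel: "u = d \<otimes> u [^] (s::int) \<otimes> v [^] (t::int)"
  shows "u [^] ((s - 1) * N) \<otimes> v [^] (t * N) = \<one>"
proof -
  have "u [^] (s * N) = u [^] N \<otimes> u [^] ((s - 1) * N)"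
    using int_pow_mult[OF u, of N "(s - 1) * N"] by (simp add: algebra_simps)
  then have "u [^] N \<otimes> (u [^] ((s - 1) * N) \<otimes> v [^] (t * N)) = u [^] (s * N) \<otimes> v [^] (t * N)"
    using u v by (simp add: m_assoc)
  also have "\<dots> = u [^] N" using int_pow_central_word[OF u v uv d dN, of s t] by (simp flip: rel)
  finally show ?thesis using u v by simp
qed

lemma central_word_system:
  assumes u: "u \<in> carrier G" and v: "v \<in> carrier G" and uv: "u \<otimes> v = v \<otimes> u"
    and c: "c \<in> centralizer G (carrier G)" and cN: "c [^] (N::int) = \<one>"
    and ru: "u = c [^] (w1::int) \<otimes> u [^] (s1::int) \<otimes> v [^] (t1::int)"
    and rv: "v = c [^] (w2::int) \<otimes> u [^] (s2::int) \<otimes> v [^] (t2::int)"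
  shows "u [^] (((s1 - 1) * N) * ((t2 - 1) * N) - (t1 * N) * (s2 * N)) = \<one>
       \<and> v [^] (((s1 - 1) * N) * ((t2 - 1) * N) - (t1 * N) * (s2 * N)) = \<one>"
proof (rule int_pow_det_eq_one[OF u v])
  have cc: "c \<in> carrier G" using c unfolding centralizer_def by blast
  have cw: "c [^] w \<in> centralizer G (carrier G)" for w :: int
    by (rule centralizer_carrier_int_pow[OF c])
  have cwN: "(c [^] w) [^] N = \<one>" for w :: int
  proof -
    have "(c [^] w) [^] N = (c [^] N) [^] w" using cc by (simp add: int_pow_pow mult.commute)
    then show ?thesis using cN by simp
  qed
  show "u [^] ((s1 - 1) * N) \<otimes> v [^] (t1 * N) = \<one>"
    by (rule central_word_relation[OF u v uv cw cwN ru])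
  have "u [^] s2 \<otimes> v [^] t2 = v [^] t2 \<otimes> u [^] s2"
    using int_pow_commute[OF v _ int_pow_commute[OF u v uv, symmetric]] u v by simp
  then have "v = c [^] w2 \<otimes> v [^] t2 \<otimes> u [^] s2"
    using rv u v cc by (simp add: m_assoc)
  from central_word_relation[OF v u uv[symmetric] cw cwN this]
  show "u [^] (s2 * N) \<otimes> v [^] ((t2 - 1) * N) = \<one>" using u v by (simp add: inv_comm)
qed

end

definition nonabelian_self_centralizing :: "('a, 'b) monoid_scheme \<Rightarrow> bool" where
  "nonabelian_self_centralizing G \<longleftrightarrow>
     (\<forall>H. subgroup H G \<longrightarrow> \<not> abelian_set G H \<longrightarrow> centralizer G H \<subseteq> H)"

context group begin

lemma centralizer_generate:
  assumes S: "S \<subseteq> carrier G" and z: "z \<in> carrier G" and zS: "\<And>s. s \<in> S \<Longrightarrow> z \<otimes> s = s \<otimes> z"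
  shows "z \<in> centralizer G (generate G S)"
proof -
  have "z \<otimes> h = h \<otimes> z" if "h \<in> generate G S" for h
    using that
  proof (induction rule: generate.induct)
    case one
    then show ?case using z by simp
  next
    case (incl h)
    then show ?case by (rule zS)
  next
    case (inv h)
    then show ?case
      using conj_central_inv[of h z \<one>] zS[OF inv] S z by (auto simp: centralizer_def)
  next
    case (eng h1 h2)
    then have "h1 \<in> carrier G" "h2 \<in> carrier G" using generate_in_carrier[OF S] by auto
    then show ?case using eng.IH z by (simp add: m_assoc flip: eng.IH(2)) (simp flip: m_assoc)
  qed
  then show ?thesis unfolding centralizer_def using z by blast
qed

lemma nonabelian_generate_pair:
  assumes "x \<in> carrier G" "y \<in> carrier G" "x \<otimes> y \<noteq> y \<otimes> x"
  shows "\<not> abelian_set G (generate G {x, y})"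
  using assms generate.incl[of x "{x, y}" G] generate.incl[of y "{x, y}" G]
  unfolding abelian_set_def by blast

lemma self_centralizing_commuting_in_generate_pair:
  assumes A: "nonabelian_self_centralizing G"
    and x: "x \<in> carrier G" and y: "y \<in> carrier G" and xy: "x \<otimes> y \<noteq> y \<otimes> x"
    and z: "z \<in> carrier G" and zx: "z \<otimes> x = x \<otimes> z" and zy: "z \<otimes> y = y \<otimes> z"
  shows "z \<in> generate G {x, y}"
proof -
  have "subgroup (generate G {x, y}) G" using x y by (intro generate_is_subgroup) auto
  then have "centralizer G (generate G {x, y}) \<subseteq> generate G {x, y}"
    using A nonabelian_generate_pair[OF x y xy] unfolding nonabelian_self_centralizing_def by blast
  moreover have "z \<in> centralizer G (generate G {x, y})"
    using x y z zx zy by (intro centralizer_generate) auto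
  ultimately show ?thesis by blast
qed

lemma self_centralizing_commuting_heisenberg_form:
  assumes A: "nonabelian_self_centralizing G"
    and a: "a \<in> carrier G" and b: "b \<in> carrier G" and c: "c \<in> centralizer G (carrier G)"
    and r: "a \<otimes> b = c \<otimes> b \<otimes> a" and cp: "c [^] ((p::int) * p) \<noteq> \<one>"
    and z: "z \<in> carrier G" and za: "z \<otimes> a = a \<otimes> z" and zb: "z \<otimes> b = b \<otimes> z"
  shows "\<exists>k i j. z = c [^] (p * p * k) \<otimes> a [^] (p * i) \<otimes> b [^] (p * j)
    \<and> c [^] (p * i) = \<one> \<and> c [^] (p * j) = \<one>"
proof -
  have cc: "c \<in> carrier G" using c unfolding centralizer_def by blast
  let ?x = "a [^] p" and ?y = "b [^] p" and ?d = "c [^] (p * p)"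
  have rxy: "?x \<otimes> ?y = ?d \<otimes> ?y \<otimes> ?x" by (rule int_pows_conj_central[OF a b c r])
  have "?x \<otimes> ?y \<noteq> ?y \<otimes> ?x" using rxy cp a b cc by (simp add: m_assoc)
  moreover have "z \<otimes> ?x = ?x \<otimes> z" and "z \<otimes> ?y = ?y \<otimes> z"
    using int_pow_commute[OF a z za[symmetric]] int_pow_commute[OF b z zb[symmetric]] by simp_all
  ultimately have "z \<in> generate G {?x, ?y}"
    using a b z by (intro self_centralizing_commuting_in_generate_pair[OF A]) simp_all
  then obtain k i j where "z = ?d [^] (k::int) \<otimes> ?x [^] (i::int) \<otimes> ?y [^] (j::int)"
    using generate_pair_heisenberg_form[OF _ _ centralizer_carrier_int_pow[OF c] rxy] a b by blast
  then have zf: "z = c [^] (p * p * k) \<otimes> a [^] (p * i) \<otimes> b [^] (p * j)"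
    using a b cc by (simp add: int_pow_pow)
  with heisenberg_word_commute[OF a b c r] za zb show ?thesis by blast
qed

lemma self_centralizing_central_commutator_ord_pos:
  assumes A: "nonabelian_self_centralizing G"
    and a: "a \<in> carrier G" and b: "b \<in> carrier G" and c: "c \<in> centralizer G (carrier G)"
    and r: "a \<otimes> b = c \<otimes> b \<otimes> a"
  shows "ord c > 0"
proof (rule ccontr)
  have cc: "c \<in> carrier G" using c unfolding centralizer_def by blast
  assume "\<not> ord c > 0"
  then have c_pow_eq_one: "c [^] n = \<one> \<longleftrightarrow> n = 0" for n :: int using cc by (simp add: int_pow_eq_id)
  then obtain k i j :: int where cf: "c = c [^] (2 * 2 * k) \<otimes> a [^] (2 * i) \<otimes> b [^] (2 * j)"
    and "c [^] (2 * i) = \<one>" "c [^] (2 * j) = \<one>"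
    using self_centralizing_commuting_heisenberg_form[OF A a b c r, of 2 c] cc
      centralizer_carrier_commute[OF c] a b by fastforce
  then have "i = 0" "j = 0" using c_pow_eq_one by simp_all
  then have "c [^] (4 * k - 1) = \<one>"
    using cf cc by (simp add: int_pow_diff)
  then have "4 * k - 1 = 0" using c_pow_eq_one by blast
  then show False by presburger
qed

lemma self_centralizing_commuting_central_powers:
  assumes A: "nonabelian_self_centralizing G"
    and a: "a \<in> carrier G" and b: "b \<in> carrier G" and c: "c \<in> centralizer G (carrier G)"
    and r: "a \<otimes> b = c \<otimes> b \<otimes> a" and c1: "c \<noteq> \<one>" and N: "N = int (ord c)"
    and z: "z \<in> carrier G" and za: "z \<otimes> a = a \<otimes> z" and zb: "z \<otimes> b = b \<otimes> z"
  shows "\<exists>w i j. z = c [^] (w::int) \<otimes> (a [^] N) [^] ((N + 1) * i) \<otimes> (b [^] N) [^] ((N + 1) * j)"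
proof -
  have cc: "c \<in> carrier G" using c unfolding centralizer_def by blast
  \<comment> \<open>\<open>(N + 1)\<^sup>2 \<equiv> 1\<close> modulo the order of \<open>c\<close>, so \<open>[a\<^sup>N\<^sup>+\<^sup>1, b\<^sup>N\<^sup>+\<^sup>1]\<close> is still \<open>c \<noteq> 1\<close>.\<close>
  have "N dvd 1 - (N + 1) * (N + 1)" by (simp add: algebra_simps)
  then have "c [^] ((N + 1) * (N + 1)) = c" using cc N by (simp add: int_pow_eq[symmetric])
  then obtain k i j where zf: "z = c [^] ((N + 1) * (N + 1) * k) \<otimes> a [^] ((N + 1) * i) \<otimes> b [^] ((N + 1) * j)"
    and "N dvd (N + 1) * i" "N dvd (N + 1) * j"
    using self_centralizing_commuting_heisenberg_form[OF A a b c r _ z za zb, of "N + 1"] c1 cc N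
    by (auto simp: int_pow_eq_id)
  moreover have "coprime N (N + 1)" by simp
  ultimately obtain i' j' where "i = N * i'" "j = N * j'"
    by (metis coprime_dvd_mult_right_iff dvdE)
  then have "z = c [^] ((N + 1) * (N + 1) * k) \<otimes> (a [^] N) [^] ((N + 1) * i') \<otimes> (b [^] N) [^] ((N + 1) * j')"
    using zf a b by (simp add: int_pow_pow mult.left_commute)
  then show ?thesis by blast
qed

lemma self_centralizing_heisenberg_finite_order:
  assumes A: "nonabelian_self_centralizing G"
    and a: "a \<in> carrier G" and b: "b \<in> carrier G" and c: "c \<in> centralizer G (carrier G)"
    and r: "a \<otimes> b = c \<otimes> b \<otimes> a" and c1: "c \<noteq> \<one>"
  obtains M :: int where "M > 0" "a [^] M = \<one>" "b [^] M = \<one>" "c [^] M = \<one>"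
proof -
  have cc: "c \<in> carrier G" using c unfolding centralizer_def by blast
  define N where "N = int (ord c)"
  have N: "N > 0" using self_centralizing_central_commutator_ord_pos[OF A a b c r] by (simp add: N_def)
  have cN: "c [^] N = \<one>" and cNN: "c [^] (N * N) = \<one>" and cNinv: "c [^] (- (1 * N)) = \<one>"
    using cc by (simp_all add: N_def int_pow_eq_id)
  define \<alpha> \<beta> where "\<alpha> = a [^] N" and "\<beta> = b [^] N"
  have \<alpha>: "\<alpha> \<in> carrier G" and \<beta>: "\<beta> \<in> carrier G" using a b by (simp_all add: \<alpha>_def \<beta>_def)
  have "\<alpha> \<otimes> a = a \<otimes> \<alpha>" "\<alpha> \<otimes> b = b \<otimes> \<alpha>" "\<beta> \<otimes> a = a \<otimes> \<beta>" "\<beta> \<otimes> b = b \<otimes> \<beta>"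
    "\<alpha> \<otimes> \<beta> = \<beta> \<otimes> \<alpha>"
    using int_pow_commute[OF a a refl, of N] int_pow_commute[OF b b refl, of N] a b cN cNN cNinv
      int_pow_conj_central[OF a b c r, of N] int_pows_swap_central[OF a b c r, of N 1]
      int_pows_conj_central[OF a b c r, of N N]
    by (simp_all add: \<alpha>_def \<beta>_def)
  then obtain w1 i1 j1 w2 i2 j2 :: int where
    "\<alpha> = c [^] w1 \<otimes> \<alpha> [^] ((N + 1) * i1) \<otimes> \<beta> [^] ((N + 1) * j1)"
    "\<beta> = c [^] w2 \<otimes> \<alpha> [^] ((N + 1) * i2) \<otimes> \<beta> [^] ((N + 1) * j2)"
    using self_centralizing_commuting_central_powers[OF A a b c r c1 N_def] \<alpha> \<beta>
    unfolding \<alpha>_def \<beta>_def by metis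
  note relations = this
  define \<Delta> where "\<Delta> = ((N + 1) * i1 - 1) * N * (((N + 1) * j2 - 1) * N) - (N + 1) * j1 * N * ((N + 1) * i2 * N)"
  have \<Delta>: "\<alpha> [^] \<Delta> = \<one>" "\<beta> [^] \<Delta> = \<one>"
    using central_word_system[OF \<alpha> \<beta> \<open>\<alpha> \<otimes> \<beta> = \<beta> \<otimes> \<alpha>\<close> c cN relations] by (simp_all add: \<Delta>_def)
  have "\<Delta> = N * N * (((N + 1) * i1 - 1) * ((N + 1) * j2 - 1) - (N + 1) * j1 * ((N + 1) * i2))"
    by (simp add: \<Delta>_def algebra_simps)
  then have "\<Delta> \<noteq> 0" using N det_one_mod_ne_zero[of "N + 1"] by simp
  show ?thesis
  proof
    show "\<bar>N * \<Delta>\<bar> > 0" using N \<open>\<Delta> \<noteq> 0\<close> by simp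
    show "a [^] \<bar>N * \<Delta>\<bar> = \<one>" "b [^] \<bar>N * \<Delta>\<bar> = \<one>" "c [^] \<bar>N * \<Delta>\<bar> = \<one>"
      using \<Delta> a b cc cN by (auto simp: \<alpha>_def \<beta>_def int_pow_pow int_pow_eq_id)
  qed
qed

lemma lower_central_subgroup: "subgroup (lower_central G n) G"
proof (induction n)
  case 0
  then show ?case by (simp add: subgroup_self)
next
  case (Suc n)
  then show ?case
    unfolding lower_central.simps commutator_subgroup_def
    by (intro generate_is_subgroup) (auto dest: subgroup.mem_carrier)
qed

lemma commutator_in_lower_central_Suc:
  "a \<in> lower_central G n \<Longrightarrow> b \<in> carrier G \<Longrightarrow> a \<otimes> b \<otimes> inv a \<otimes> inv b \<in> lower_central G (Suc n)"
  unfolding lower_central.simps commutator_subgroup_def by (rule generate.incl) blast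

lemma lower_central_Suc_eq_one_iff:
  "lower_central G (Suc n) = {\<one>}
    \<longleftrightarrow> (\<forall>a \<in> lower_central G n. \<forall>b \<in> carrier G. a \<otimes> b \<otimes> inv a \<otimes> inv b = \<one>)"
proof
  assume "lower_central G (Suc n) = {\<one>}"
  then show "\<forall>a \<in> lower_central G n. \<forall>b \<in> carrier G. a \<otimes> b \<otimes> inv a \<otimes> inv b = \<one>"
    using commutator_in_lower_central_Suc by blast
next
  assume "\<forall>a \<in> lower_central G n. \<forall>b \<in> carrier G. a \<otimes> b \<otimes> inv a \<otimes> inv b = \<one>"
  then have "lower_central G (Suc n) \<subseteq> {\<one>}"
    unfolding lower_central.simps commutator_subgroup_def
    by (intro generate_subgroup_incl[OF _ triv_subgroup]) auto
  then show "lower_central G (Suc n) = {\<one>}"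
    using subgroup.one_closed[OF lower_central_subgroup] by blast
qed

lemma commutator_eq_one_iff:
  assumes "a \<in> carrier G" "b \<in> carrier G"
  shows "a \<otimes> b \<otimes> inv a \<otimes> inv b = \<one> \<longleftrightarrow> a \<otimes> b = b \<otimes> a"
proof -
  have "a \<otimes> b \<otimes> inv a \<otimes> inv b = (a \<otimes> b) \<otimes> inv (b \<otimes> a)"
    using assms by (simp add: m_assoc inv_mult_group)
  then show ?thesis using assms by (simp add: inv_solve_right')
qed

lemma nilpotent_nonabelian_central_commutator:
  assumes nil: "lower_central G n = {\<one>}"
    and x: "x \<in> carrier G" and y: "y \<in> carrier G" and xy: "x \<otimes> y \<noteq> y \<otimes> x"
  obtains a b where "a \<in> carrier G" "b \<in> carrier G" "a \<otimes> b \<otimes> inv a \<otimes> inv b \<noteq> \<one>"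
    "a \<otimes> b \<otimes> inv a \<otimes> inv b \<in> centralizer G (carrier G)"
proof -
  let ?P = "\<lambda>k. lower_central G (Suc k) = {\<one>}"
  have "?P n" unfolding lower_central_Suc_eq_one_iff using nil by simp
  moreover have "\<not> ?P 0"
    unfolding lower_central_Suc_eq_one_iff using x y xy commutator_eq_one_iff[OF x y] by auto
  ultimately obtain k where "\<forall>i \<le> k. \<not> ?P i" "?P (Suc k)" using ex_least_nat_less[of ?P n] by blast
  then have "\<not> ?P k" "?P (Suc k)" by simp_all
  then obtain a b where a: "a \<in> lower_central G k" and b: "b \<in> carrier G"
    and ab: "a \<otimes> b \<otimes> inv a \<otimes> inv b \<noteq> \<one>" and central:
      "\<forall>g \<in> carrier G. (a \<otimes> b \<otimes> inv a \<otimes> inv b) \<otimes> g \<otimes> inv (a \<otimes> b \<otimes> inv a \<otimes> inv b) \<otimes> inv g = \<one>"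
    unfolding lower_central_Suc_eq_one_iff[of "Suc k"] lower_central_Suc_eq_one_iff[of k]
    using commutator_in_lower_central_Suc by blast
  have "a \<in> carrier G" using a subgroup.mem_carrier[OF lower_central_subgroup] by blast
  with b central show ?thesis
    by (intro that[OF _ b ab]) (auto simp: centralizer_def commutator_eq_one_iff)
qed

lemma finite_if_normalizes_self_centralizing:
  assumes H: "subgroup H G" and Hfin: "finite H" and Hcent: "centralizer G H \<subseteq> H"
    and K: "K \<subseteq> carrier G" and conj: "\<And>g h. g \<in> K \<Longrightarrow> h \<in> H \<Longrightarrow> g \<otimes> h \<otimes> inv g \<in> H"
  shows "finite K"
proof -
  define conj_on_H where "conj_on_H g = restrict (\<lambda>h. g \<otimes> h \<otimes> inv g) H" for g
  have "conj_on_H ` K \<subseteq> H \<rightarrow>\<^sub>E H" using conj unfolding conj_on_H_def by auto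
  then have image_finite: "finite (conj_on_H ` K)" by (rule finite_subset) (simp add: Hfin finite_PiE)
  have fibre: "{k \<in> K. conj_on_H k = conj_on_H g} \<subseteq> (\<lambda>h. g \<otimes> h) ` H" if g: "g \<in> K" for g
  proof
    fix k assume "k \<in> {k \<in> K. conj_on_H k = conj_on_H g}"
    then have k: "k \<in> K" and "conj_on_H k = conj_on_H g" by auto
    then have same: "k \<otimes> h \<otimes> inv k = g \<otimes> h \<otimes> inv g" if "h \<in> H" for h
      using that by (metis conj_on_H_def restrict_apply')
    have gc: "g \<in> carrier G" and kc: "k \<in> carrier G" using g k K by auto
    have "inv g \<otimes> k \<in> centralizer G H"
      unfolding centralizer_def
    proof (intro CollectI conjI ballI)
      show "inv g \<otimes> k \<in> carrier G" using gc kc by simp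
      fix h assume h: "h \<in> H"
      then have hc: "h \<in> carrier G" using subgroup.mem_carrier[OF H] by blast
      have "inv g \<otimes> k \<otimes> h = inv g \<otimes> (k \<otimes> h \<otimes> inv k) \<otimes> k" using gc kc hc by (simp add: m_assoc)
      also have "\<dots> = h \<otimes> (inv g \<otimes> k)" using gc kc hc by (simp add: same[OF h] m_assoc flip: m_assoc)
      finally show "inv g \<otimes> k \<otimes> h = h \<otimes> (inv g \<otimes> k)" .
    qed
    then have "inv g \<otimes> k \<in> H" using Hcent by blast
    moreover have "k = g \<otimes> (inv g \<otimes> k)" using gc kc by (simp flip: m_assoc)
    ultimately show "k \<in> (\<lambda>h. g \<otimes> h) ` H" by blast
  qed
  have "finite {k \<in> K. conj_on_H k = \<phi>}" if "\<phi> \<in> conj_on_H ` K" for \<phi>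
  proof -
    from that obtain g where g: "g \<in> K" and "\<phi> = conj_on_H g" by blast
    then show ?thesis using finite_subset[OF fibre[OF g] finite_imageI[OF Hfin]] by simp
  qed
  then have "finite (\<Union>\<phi> \<in> conj_on_H ` K. {k \<in> K. conj_on_H k = \<phi>})"
    using image_finite by (intro finite_UN_I)
  moreover have "K \<subseteq> (\<Union>\<phi> \<in> conj_on_H ` K. {k \<in> K. conj_on_H k = \<phi>})" by blast
  ultimately show ?thesis by (rule finite_subset[rotated])
qed

lemma generate_conj_closed:
  assumes L: "subgroup L G" and S: "S \<subseteq> carrier G" and S_inv: "\<And>s. s \<in> S \<Longrightarrow> inv s \<in> S"
    and SL: "\<And>s h. s \<in> S \<Longrightarrow> h \<in> L \<Longrightarrow> s \<otimes> h \<otimes> inv s \<in> L"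
    and g: "g \<in> generate G S" and h: "h \<in> L"
  shows "g \<otimes> h \<otimes> inv g \<in> L"
  using g h
proof (induction arbitrary: h rule: generate.induct)
  case one
  then show ?case using subgroup.mem_carrier[OF L] by simp
next
  case (incl s)
  then show ?case by (rule SL)
next
  case (inv s)
  then show ?case using SL[OF S_inv] S by auto
next
  case (eng g1 g2)
  have "g1 \<in> carrier G" "g2 \<in> carrier G" "h \<in> carrier G"
    using eng.hyps generate_in_carrier[OF S] subgroup.mem_carrier[OF L eng.prems] by auto
  then have "g1 \<otimes> g2 \<otimes> h \<otimes> inv (g1 \<otimes> g2) = g1 \<otimes> (g2 \<otimes> h \<otimes> inv g2) \<otimes> inv g1"
    by (simp add: m_assoc inv_mult_group)
  then show ?case using eng.IH eng.prems by simp
qed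

lemma abelian_set_subset: "abelian_set G B \<Longrightarrow> A \<subseteq> B \<Longrightarrow> abelian_set G A"
  unfolding abelian_set_def by blast

lemma self_centralizing_finite_generate_lower_central_step:
  assumes A: "nonabelian_self_centralizing G"
    and H0: "subgroup H0 G" and H0_nonabelian: "\<not> abelian_set G H0"
    and fin: "finite (generate G (H0 \<union> lower_central G (Suc i)))"
  shows "finite (generate G (H0 \<union> lower_central G i))"
proof -
  let ?L = "generate G (H0 \<union> lower_central G (Suc i))"
  have gens: "H0 \<union> lower_central G k \<subseteq> carrier G" for k
    using subgroup.subset[OF H0] subgroup.subset[OF lower_central_subgroup] by blast
  have L: "subgroup ?L G" using gens by (rule generate_is_subgroup)
  have gens_in_L: "H0 \<union> lower_central G (Suc i) \<subseteq> ?L" by (auto intro: generate.incl)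
  then have "\<not> abelian_set G ?L" using H0_nonabelian abelian_set_subset[of ?L H0] by blast
  then have L_cent: "centralizer G ?L \<subseteq> ?L"
    using A L unfolding nonabelian_self_centralizing_def by blast
  have conj: "s \<otimes> h \<otimes> inv s \<in> ?L" if s: "s \<in> H0 \<union> lower_central G i" and h: "h \<in> ?L" for s h
    using s
  proof
    assume "s \<in> H0"
    then have "s \<in> ?L" using gens_in_L by blast
    then show ?thesis using h by (intro subgroup.m_closed[OF L] subgroup.m_inv_closed[OF L])
  next
    assume s: "s \<in> lower_central G i"
    have hc: "h \<in> carrier G" using h subgroup.mem_carrier[OF L] by blast
    have sc: "s \<in> carrier G" using s gens by blast
    have "s \<otimes> h \<otimes> inv s \<otimes> inv h \<in> ?L"
      using commutator_in_lower_central_Suc[OF s hc] gens_in_L by blast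
    then have "s \<otimes> h \<otimes> inv s \<otimes> inv h \<otimes> h \<in> ?L" using h by (rule subgroup.m_closed[OF L])
    then show ?thesis using hc sc by (simp add: m_assoc)
  qed
  have gens_inv: "inv s \<in> H0 \<union> lower_central G i" if "s \<in> H0 \<union> lower_central G i" for s
    using that subgroup.m_inv_closed[OF H0] subgroup.m_inv_closed[OF lower_central_subgroup] by blast
  show ?thesis
  proof (rule finite_if_normalizes_self_centralizing[OF L fin L_cent])
    show "generate G (H0 \<union> lower_central G i) \<subseteq> carrier G" by (rule generate_incl[OF gens])
    show "g \<otimes> h \<otimes> inv g \<in> ?L" if "g \<in> generate G (H0 \<union> lower_central G i)" "h \<in> ?L" for g h
      using generate_conj_closed[OF L gens gens_inv conj that] .
  qed
qed

lemma self_centralizing_nilpotent_finite: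
  assumes A: "nonabelian_self_centralizing G" and nil: "lower_central G n = {\<one>}"
    and H0: "subgroup H0 G" and H0_nonabelian: "\<not> abelian_set G H0" and H0_finite: "finite H0"
  shows "finite (carrier G)"
proof -
  have "generate G (H0 \<union> lower_central G n) \<subseteq> H0"
    using nil H0 by (intro generate_subgroup_incl) (auto intro: subgroup.one_closed)
  then have "finite (generate G (H0 \<union> lower_central G n))" using H0_finite by (rule finite_subset)
  then have "finite (generate G (H0 \<union> lower_central G 0))"
    using inc_induct[of 0 n "\<lambda>k. finite (generate G (H0 \<union> lower_central G k))"]
      self_centralizing_finite_generate_lower_central_step[OF A H0 H0_nonabelian] by blast
  moreover have "carrier G \<subseteq> generate G (H0 \<union> lower_central G 0)" by (auto intro: generate.incl)
  ultimately show ?thesis by (rule finite_subset[rotated])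
qed

lemma self_centralizing_nilpotent_nonabelian_finite:
  assumes A: "nonabelian_self_centralizing G" and nil: "lower_central G n = {\<one>}"
    and x: "x \<in> carrier G" and y: "y \<in> carrier G" and xy: "x \<otimes> y \<noteq> y \<otimes> x"
  shows "finite (carrier G)"
proof -
  obtain a b where a: "a \<in> carrier G" and b: "b \<in> carrier G"
    and c1: "a \<otimes> b \<otimes> inv a \<otimes> inv b \<noteq> \<one>" and c: "a \<otimes> b \<otimes> inv a \<otimes> inv b \<in> centralizer G (carrier G)"
    by (rule nilpotent_nonabelian_central_commutator[OF nil x y xy])
  have r: "a \<otimes> b = (a \<otimes> b \<otimes> inv a \<otimes> inv b) \<otimes> b \<otimes> a" using a b by (simp add: m_assoc)
  obtain M :: int where M: "M > 0" "a [^] M = \<one>" "b [^] M = \<one>" "(a \<otimes> b \<otimes> inv a \<otimes> inv b) [^] M = \<one>"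
    by (rule self_centralizing_heisenberg_finite_order[OF A a b c r c1])
  have "subgroup (generate G {a, b}) G" using a b by (intro generate_is_subgroup) auto
  moreover have "\<not> abelian_set G (generate G {a, b})"
    using c1 commutator_eq_one_iff[OF a b] by (intro nonabelian_generate_pair[OF a b]) simp
  moreover have "finite (generate G {a, b})" by (rule finite_generate_pair_heisenberg[OF a b c r M])
  ultimately show ?thesis by (rule self_centralizing_nilpotent_finite[OF A nil])
qed

end

theorem theorem3p1:
  fixes G :: "('a, 'b) monoid_scheme"
  assumes "nilpotent_group G"
    and "\<And>H. subgroup H G \<Longrightarrow> \<not> abelian_set G H \<Longrightarrow> centralizer G H \<subseteq> H"
  shows "comm_group G \<or> finite (carrier G)"
proof -
  obtain n where G: "group G" and nil: "lower_central G n = {\<one>\<^bsub>G\<^esub>}"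
    using assms(1) unfolding nilpotent_group_def by blast
  have A: "nonabelian_self_centralizing G"
    using assms(2) unfolding nonabelian_self_centralizing_def by blast
  show ?thesis
  proof (cases "\<forall>x \<in> carrier G. \<forall>y \<in> carrier G. x \<otimes>\<^bsub>G\<^esub> y = y \<otimes>\<^bsub>G\<^esub> x")
    case True
    then show ?thesis using group.group_comm_groupI[OF G] by blast
  next
    case False
    then show ?thesis using group.self_centralizing_nilpotent_nonabelian_finite[OF G A nil] by blast
  qed
qed

end
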